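(* Let $N>1$ be an integer, $0<\epsilon<e$, $\tfrac12<\beta<1$, and $K=\lceil \log_{1/\beta}(N)\rceil\cdot\lceil \log(e/\epsilon)/\log(\beta/(1-\beta))\rceil$. Let $H$ be the $(N+1)\times(N+1)$ matrix with $H_{jk}=\Lambda\!\left(\tfrac{j+k}{2}\right)$, $0\le j,k\le N$, where $\Lambda(z)=\Gamma(z+1/2)/\Gamma(z+1)$. Then there is an $(N+1)\times(N+1)$ real matrix $\tilde H$ of rank at most $K+1$ such that $\max_{0\le j,k\le N}|H_{jk}-\tilde H_{jk}|\le\epsilon$.
   Context: $\Gamma$ denotes the gamma function; $e$ is Euler's number; $\log$ is the natural logarithm. *)

theory Defs
  imports "HOL-Analysis.Analysis" "Jordan_Normal_Form.DL_Rank"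
begin

definition Lambda :: "real \<Rightarrow> real" where
  "Lambda z = Gamma (z + 1/2) / Gamma (z + 1)"

end

theory Submission
  imports Defs
begin

text \<open>
  With the weight \<open>w(t) = (t(1-t))^(-1/2) / sqrt pi\<close> on \<open>(0,1)\<close>, the Beta integral gives
  \<open>\<Lambda>(z) = \<integral> t^z w(t) dt\<close>. The rows \<open>j \<ge> 1\<close> are split into the \<open>L\<close> geometric blocks
  \<open>\<beta> c\<^sub>i \<le> j \<le> c\<^sub>i\<close>, \<open>c\<^sub>i = \<beta>^i N\<close>. Inside a block,
  \<open>t^((j+k)/2) = t^((c\<^sub>i+k)/2) exp(((c\<^sub>i-j)/2)(-ln t))\<close>, and since \<open>c\<^sub>i - j \<le> q j\<close> with
  \<open>q = (1-\<beta>)/\<beta>\<close>, truncating the exponential series after \<open>M\<close> terms errs by at most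
  \<open>q^M t^(k/2) \<le> q^M\<close>. Integrating against \<open>w\<close> turns this into an entrywise error
  \<open>q^M sqrt pi \<le> \<epsilon>\<close>, while each truncated block is a sum of \<open>M\<close> rank-one matrices in
  \<open>(j,k)\<close>; row 0 is reproduced exactly by one further rank-one matrix.
\<close>

definition Lambda_weight :: "real \<Rightarrow> real" where
  "Lambda_weight t = t powr (-1/2) * (1 - t) powr (-1/2) / sqrt pi"

lemma Lambda_weight_nonneg: "0 \<le> Lambda_weight t"
  by (simp add: Lambda_weight_def)

lemma continuous_on_Lambda_weight: "continuous_on {0<..<1} Lambda_weight"
  unfolding Lambda_weight_def by (intro continuous_intros) auto

lemma Beta_eq_Lambda: "Beta (z + 1/2) (1/2) = sqrt pi * Lambda z"
proof -
  have "z + 1/2 + 1/2 = z + 1" by simp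
  then show ?thesis
    by (simp add: Beta_def Lambda_def Gamma_one_half_real add.commute)
qed

lemma has_integral_powr_Lambda_weight:
  assumes "-1/2 < z"
  shows "((\<lambda>t. t powr z * Lambda_weight t) has_integral Lambda z) {0<..<1}"
proof -
  have "((\<lambda>t. t powr (z + 1/2 - 1) * (1 - t) powr (1/2 - 1) / sqrt pi)
          has_integral Beta (z + 1/2) (1/2) / sqrt pi) {0<..<1}"
    using has_integral_Beta_real[of "z + 1/2" "1/2"] assms
    by (intro has_integral_divide) (simp add: has_integral_Icc_iff_Ioo)
  then have "((\<lambda>t. t powr (z + 1/2 - 1) * (1 - t) powr (1/2 - 1) / sqrt pi)
               has_integral Lambda z) {0<..<1}"
    by (simp add: Beta_eq_Lambda)
  then show ?thesis
    by (rule has_integral_eq[rotated]) (simp add: Lambda_weight_def powr_add[symmetric])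
qed

lemma has_integral_Lambda_weight: "(Lambda_weight has_integral sqrt pi) {0<..<1}"
proof -
  have "((\<lambda>t. t powr 0 * Lambda_weight t) has_integral Lambda 0) {0<..<1}"
    by (rule has_integral_powr_Lambda_weight) simp
  moreover have "Lambda 0 = sqrt pi"
    by (simp add: Lambda_def Gamma_one_half_real)
  ultimately show ?thesis
    by (auto elim: has_integral_eq[rotated])
qed

lemma exp_minus_taylor_bounds:
  fixes y :: real
  assumes "0 \<le> y"
  shows "0 \<le> exp y - (\<Sum>m<n. y ^ m / fact m)"
    and "exp y - (\<Sum>m<n. y ^ m / fact m) \<le> y ^ n / fact n * exp y"
proof -
  obtain t where t: "\<bar>t\<bar> \<le> \<bar>y\<bar>" "exp y = (\<Sum>m<n. y ^ m / fact m) + exp t / fact n * y ^ n"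
    using Maclaurin_exp_le[of y n] by blast
  have "0 \<le> exp t / fact n * y ^ n"
    using assms by simp
  then show "0 \<le> exp y - (\<Sum>m<n. y ^ m / fact m)"
    using t by linarith
  have "t \<le> y"
    using t assms by linarith
  then have "exp t \<le> exp y"
    by simp
  then have "exp t / fact n * y ^ n \<le> y ^ n / fact n * exp y"
    using assms by (simp add: divide_right_mono mult_right_mono mult.commute)
  then show "exp y - (\<Sum>m<n. y ^ m / fact m) \<le> y ^ n / fact n * exp y"
    using t by linarith
qed

lemma power_div_fact_le_exp:
  fixes x :: real
  assumes "0 \<le> x"
  shows "x ^ n / fact n \<le> exp x"
proof -
  have "x ^ n / fact n \<le> (\<Sum>m<Suc n. x ^ m / fact m)"
    using assms by (intro member_le_sum) auto
  then show ?thesis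
    using exp_minus_taylor_bounds(1)[OF assms, of "Suc n"] by linarith
qed

lemma exp_minus_taylor_le_scaled:
  fixes x y q :: real
  assumes "0 \<le> y" "y \<le> q * x" "0 \<le> q" "0 \<le> x"
  shows "exp y - (\<Sum>m<n. y ^ m / fact m) \<le> q ^ n * exp (x + y)"
proof -
  have "exp y - (\<Sum>m<n. y ^ m / fact m) \<le> y ^ n / fact n * exp y"
    using assms(1) by (rule exp_minus_taylor_bounds(2))
  also have "\<dots> \<le> q ^ n * (x ^ n / fact n) * exp y"
    using assms by (simp add: divide_right_mono power_mono power_mult_distrib[symmetric])
  also have "\<dots> \<le> q ^ n * exp x * exp y"
    using assms by (intro mult_right_mono mult_left_mono power_div_fact_le_exp) simp_all
  finally show ?thesis
    by (simp add: exp_add mult.assoc)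
qed

lemma minus_ln_power_mult_powr_le:
  fixes t a :: real
  assumes "0 < t" "t \<le> 1" "0 < a"
  shows "(- ln t) ^ r * t powr a \<le> fact r / a ^ r"
proof -
  have "0 \<le> a * - ln t"
    using assms by (intro mult_nonneg_nonneg) simp_all
  then have "(a * - ln t) ^ r \<le> fact r * exp (a * - ln t)"
    using power_div_fact_le_exp by (simp add: divide_le_eq mult.commute)
  then have "(a * - ln t) ^ r * t powr a \<le> fact r * (exp (a * - ln t) * t powr a)"
    unfolding mult.assoc[symmetric] by (rule mult_right_mono) simp
  also have "exp (a * - ln t) * t powr a = 1"
    using assms by (simp add: powr_def exp_add[symmetric])
  finally have "a ^ r * ((- ln t) ^ r * t powr a) \<le> fact r"
    by (simp only: power_mult_distrib mult.assoc mult_1_right)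
  then show ?thesis
    using assms by (simp add: le_divide_eq mult.commute)
qed

lemma integrable_minus_ln_power_powr_Lambda_weight:
  assumes "0 < a"
  shows "(\<lambda>t. (- ln t) ^ r * t powr a * Lambda_weight t) integrable_on {0<..<1}"
proof (rule measurable_bounded_by_integrable_imp_integrable)
  show "(\<lambda>t. (- ln t) ^ r * t powr a * Lambda_weight t) \<in> borel_measurable (lebesgue_on {0<..<1})"
    using continuous_on_Lambda_weight
    by (intro continuous_imp_measurable_on_sets_lebesgue continuous_intros) auto
  show "(\<lambda>t. fact r / a ^ r * Lambda_weight t) integrable_on {0<..<1}"
    using has_integral_mult_right[OF has_integral_Lambda_weight] by blast
  show "norm ((- ln t) ^ r * t powr a * Lambda_weight t) \<le> fact r / a ^ r * Lambda_weight t"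
    if "t \<in> {0<..<1}" for t
  proof -
    have "0 \<le> (- ln t) ^ r * t powr a * Lambda_weight t"
      using that by (simp add: Lambda_weight_nonneg)
    moreover have "(- ln t) ^ r * t powr a * Lambda_weight t \<le> fact r / a ^ r * Lambda_weight t"
      using that assms
      by (intro mult_right_mono minus_ln_power_mult_powr_le Lambda_weight_nonneg) simp_all
    ultimately show ?thesis
      by simp
  qed
qed auto

lemma powr_taylor_expansion_error:
  fixes t c j k \<beta> :: real
  assumes t: "0 < t" "t < 1" and "0 < \<beta>" "\<beta> \<le> 1" "\<beta> * c \<le> j" "j \<le> c" "0 \<le> j" "0 \<le> k"
  shows "\<bar>t powr ((j + k) / 2)
           - (\<Sum>r<M. ((c - j) / 2) ^ r / fact r * ((- ln t) ^ r * t powr ((c + k) / 2)))\<bar>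
         \<le> ((1 - \<beta>) / \<beta>) ^ M"
proof -
  define s where "s = - ln t"
  define y where "y = (c - j) / 2 * s"
  define q where "q = (1 - \<beta>) / \<beta>"
  have s: "0 \<le> s" and q: "0 \<le> q"
    using assms by (simp_all add: s_def q_def)
  have y: "0 \<le> y"
    using s assms by (simp add: y_def)
  have powr_mult_exp: "t powr a * exp (e * s) = t powr (a - e)" for a e
    using t by (simp add: s_def powr_def exp_add[symmetric] algebra_simps)
  have "(c + k) / 2 - (c - j) / 2 = (j + k) / 2"
    by (simp add: field_simps)
  then have "t powr ((j + k) / 2) = t powr ((c + k) / 2) * exp y"
    using powr_mult_exp[of "(c + k) / 2" "(c - j) / 2"] by (simp only: y_def)
  moreover have "(\<Sum>r<M. ((c - j) / 2) ^ r / fact r * ((- ln t) ^ r * t powr ((c + k) / 2)))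
      = t powr ((c + k) / 2) * (\<Sum>r<M. y ^ r / fact r)"
    unfolding s_def[symmetric] sum_distrib_left
    by (intro sum.cong refl) (simp add: y_def power_mult_distrib[symmetric])
  ultimately have diff: "t powr ((j + k) / 2)
        - (\<Sum>r<M. ((c - j) / 2) ^ r / fact r * ((- ln t) ^ r * t powr ((c + k) / 2)))
      = t powr ((c + k) / 2) * (exp y - (\<Sum>r<M. y ^ r / fact r))"
    by (simp add: right_diff_distrib)
  have "c - j \<le> q * j"
    using assms by (simp add: q_def field_simps)
  then have "(c - j) * s \<le> q * j * s"
    using s by (rule mult_right_mono)
  then have "y \<le> q * (j / 2 * s)"
    by (simp add: y_def)
  then have "exp y - (\<Sum>r<M. y ^ r / fact r) \<le> q ^ M * exp (j / 2 * s + y)"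
    using y q s \<open>0 \<le> j\<close> by (intro exp_minus_taylor_le_scaled) simp_all
  also have "j / 2 * s + y = c / 2 * s"
    by (simp add: y_def field_simps)
  finally have "t powr ((c + k) / 2) * (exp y - (\<Sum>r<M. y ^ r / fact r))
      \<le> t powr ((c + k) / 2) * (q ^ M * exp (c / 2 * s))"
    by (simp add: mult_left_mono)
  also have "\<dots> = q ^ M * (t powr ((c + k) / 2) * exp (c / 2 * s))"
    by (simp add: mult_ac)
  also have "\<dots> = q ^ M * t powr (k / 2)"
    using powr_mult_exp[of "(c + k) / 2" "c / 2"] by (simp add: add_divide_distrib)
  also have "\<dots> \<le> q ^ M"
    using t assms q by (simp add: mult_left_le powr_le1)
  finally show ?thesis
    using diff exp_minus_taylor_bounds(1)[OF y, of M] by (simp add: q_def)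
qed

lemma Lambda_taylor_expansion_error:
  fixes c j k \<beta> :: real
  assumes "0 < \<beta>" "\<beta> \<le> 1" "\<beta> * c \<le> j" "j \<le> c" "0 \<le> j" "0 \<le> k" "0 < c + k"
  shows "\<bar>Lambda ((j + k) / 2) - (\<Sum>r<M. ((c - j) / 2) ^ r / fact r
           * integral {0<..<1} (\<lambda>t. (- ln t) ^ r * t powr ((c + k) / 2) * Lambda_weight t))\<bar>
         \<le> ((1 - \<beta>) / \<beta>) ^ M * sqrt pi"
proof -
  define Q where "Q = ((1 - \<beta>) / \<beta>) ^ M"
  define F where "F r = (\<lambda>t. (- ln t) ^ r * t powr ((c + k) / 2) * Lambda_weight t)" for r
  define E where "E t = t powr ((j + k) / 2) * Lambda_weight t
                        - (\<Sum>r<M. ((c - j) / 2) ^ r / fact r * F r t)" for t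
  have E: "(E has_integral Lambda ((j + k) / 2)
          - (\<Sum>r<M. ((c - j) / 2) ^ r / fact r * integral {0<..<1} (F r))) {0<..<1}"
    unfolding E_def F_def using assms
    by (intro has_integral_diff has_integral_powr_Lambda_weight has_integral_sum
          has_integral_mult_right integrable_integral integrable_minus_ln_power_powr_Lambda_weight)
      auto
  moreover have W: "((\<lambda>t. Q * Lambda_weight t) has_integral Q * sqrt pi) {0<..<1}"
    by (rule has_integral_mult_right[OF has_integral_Lambda_weight])
  moreover have "norm (E t) \<le> Q * Lambda_weight t" if "t \<in> {0<..<1}" for t
  proof -
    have "E t = (t powr ((j + k) / 2)
          - (\<Sum>r<M. ((c - j) / 2) ^ r / fact r * ((- ln t) ^ r * t powr ((c + k) / 2))))
        * Lambda_weight t"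
      by (simp only: E_def F_def left_diff_distrib sum_distrib_right mult.assoc)
    then show ?thesis
      using that assms powr_taylor_expansion_error[of t \<beta> c j k M]
      by (simp add: Q_def abs_mult Lambda_weight_nonneg mult_right_mono)
  qed
  ultimately have "norm (Lambda ((j + k) / 2)
          - (\<Sum>r<M. ((c - j) / 2) ^ r / fact r * integral {0<..<1} (F r))) \<le> Q * sqrt pi"
    using integral_norm_bound_integral[OF has_integral_integrable[OF E] has_integral_integrable[OF W]]
    by (simp add: integral_unique[OF E] integral_unique[OF has_integral_Lambda_weight])
  then show ?thesis
    by (simp add: Q_def F_def)
qed

definition geometric_block :: "real \<Rightarrow> real \<Rightarrow> real \<Rightarrow> nat" where
  "geometric_block \<beta> N x = (LEAST i. \<beta> ^ Suc i * N \<le> x)"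

lemma geometric_block_bounds:
  fixes \<beta> N x :: real
  assumes "\<beta> ^ L * N \<le> x" "0 < L" "x \<le> N"
  defines "i \<equiv> geometric_block \<beta> N x"
  shows "i < L" "\<beta> ^ Suc i * N \<le> x" "x \<le> \<beta> ^ i * N"
proof -
  have L: "\<beta> ^ Suc (L - 1) * N \<le> x"
    using assms by simp
  then have "i \<le> L - 1"
    unfolding i_def geometric_block_def by (rule Least_le)
  then show "i < L"
    using assms by linarith
  show "\<beta> ^ Suc i * N \<le> x"
    unfolding i_def geometric_block_def using L by (rule LeastI)
  show "x \<le> \<beta> ^ i * N"
  proof (cases i)
    case (Suc i')
    then have "\<not> \<beta> ^ Suc i' * N \<le> x"
      using not_less_Least[of i' "\<lambda>i. \<beta> ^ Suc i * N \<le> x"] unfolding i_def geometric_block_def by simp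
    then show ?thesis
      using Suc by simp
  qed (use assms in simp)
qed

lemma rank_sum_outer_products_le:
  fixes f g :: "'i \<Rightarrow> nat \<Rightarrow> 'a :: field"
  assumes "finite S"
  shows "vec_space.rank n (mat n m (\<lambda>(j, k). \<Sum>p\<in>S. f p j * g p k)) \<le> card S"
  using assms
proof (induction S rule: finite_induct)
  case empty
  have zero: "mat n m (\<lambda>(j, k). \<Sum>p\<in>{}. f p j * g p k) = (0\<^sub>m n m :: 'a mat)"
    by (rule eq_matI) auto
  show ?case
    unfolding zero vec_space.rank_0I by simp
next
  case (insert x S)
  have split: "mat n m (\<lambda>(j, k). \<Sum>p\<in>insert x S. f p j * g p k)
      = mat n m (\<lambda>(j, k). f x j * g x k) + mat n m (\<lambda>(j, k). \<Sum>p\<in>S. f p j * g p k)"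
    by (rule eq_matI) (auto simp: insert.hyps)
  have "vec_space.rank n (mat n m (\<lambda>(j, k). \<Sum>p\<in>insert x S. f p j * g p k))
      \<le> vec_space.rank n (mat n m (\<lambda>(j, k). f x j * g x k))
        + vec_space.rank n (mat n m (\<lambda>(j, k). \<Sum>p\<in>S. f p j * g p k))"
    unfolding split by (rule vec_space.rank_subadditive) auto
  moreover have "vec_space.rank n (mat n m (\<lambda>(j, k). f x j * g x k)) \<le> 1"
    by (rule vec_space.rank_le_1_product_entries[of _ n m "f x" "g x"]) auto
  ultimately show ?case
    using insert by simp
qed

lemma Lambda_matrix_low_rank_approximation:
  fixes N L M :: nat and \<beta> :: real
  assumes \<beta>: "0 < \<beta>" "\<beta> \<le> 1" and L: "0 < L" "\<beta> ^ L * N \<le> 1"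
  shows "\<exists>Ht :: real mat. Ht \<in> carrier_mat (N + 1) (N + 1)
           \<and> vec_space.rank (N + 1) Ht \<le> L * M + 1
           \<and> (\<forall>j\<le>N. \<forall>k\<le>N. \<bar>Lambda ((real j + real k) / 2) - Ht $$ (j, k)\<bar>
                              \<le> ((1 - \<beta>) / \<beta>) ^ M * sqrt pi)"
proof -
  define c where "c i = \<beta> ^ i * N" for i
  define blk where "blk j = geometric_block \<beta> N (real j)" for j
  define u where "u p j = (if j \<noteq> 0 \<and> blk j = fst p
                          then ((c (fst p) - j) / 2) ^ snd p / fact (snd p) else 0)"
    for p :: "nat \<times> nat" and j
  define v where "v p k = integral {0<..<1}
                    (\<lambda>t. (- ln t) ^ snd p * t powr ((c (fst p) + k) / 2) * Lambda_weight t)"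
    for p :: "nat \<times> nat" and k :: nat
  define A :: "real mat"
    where "A = mat (N + 1) (N + 1) (\<lambda>(j, k). of_bool (j = 0) * Lambda (real k / 2))"
  define B :: "real mat"
    where "B = mat (N + 1) (N + 1) (\<lambda>(j, k). \<Sum>p\<in>{..<L} \<times> {..<M}. u p j * v p k)"
  have "vec_space.rank (N + 1) (A + B) \<le> vec_space.rank (N + 1) A + vec_space.rank (N + 1) B"
    unfolding A_def B_def by (rule vec_space.rank_subadditive) auto
  moreover have "vec_space.rank (N + 1) A \<le> 1"
    unfolding A_def by (rule vec_space.rank_le_1_product_entries) auto
  moreover have "vec_space.rank (N + 1) B \<le> L * M"
    using rank_sum_outer_products_le[of "{..<L} \<times> {..<M}" "N + 1" "N + 1" u v]
    by (simp add: B_def card_cartesian_product)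
  ultimately have rank: "vec_space.rank (N + 1) (A + B) \<le> L * M + 1"
    by linarith
  have "\<bar>Lambda ((real j + real k) / 2) - (A + B) $$ (j, k)\<bar> \<le> ((1 - \<beta>) / \<beta>) ^ M * sqrt pi"
    if jk: "j \<le> N" "k \<le> N" for j k
  proof (cases "j = 0")
    case True
    then show ?thesis
      using jk \<beta> by (simp add: A_def B_def u_def)
  next
    case False
    have "\<beta> ^ L * N \<le> real j" "real j \<le> real N"
      using L False jk by (simp_all add: order_trans)
    note block = geometric_block_bounds[OF this(1) L(1) this(2)]
    have "(\<Sum>p\<in>{..<L} \<times> {..<M}. u p j * v p k)
        = (\<Sum>i<L. if i = blk j then \<Sum>r<M. u (i, r) j * v (i, r) k else 0)"
      unfolding sum.cartesian_product' using False by (intro sum.cong) (auto simp: u_def)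
    also have "\<dots> = (\<Sum>r<M. ((c (blk j) - j) / 2) ^ r / fact r * v (blk j, r) k)"
      using block False by (simp add: u_def blk_def)
    finally have "(A + B) $$ (j, k) = \<dots>"
      using jk False by (simp add: A_def B_def)
    moreover have "\<bar>Lambda ((real j + real k) / 2) - \<dots>\<bar> \<le> ((1 - \<beta>) / \<beta>) ^ M * sqrt pi"
      unfolding v_def fst_conv snd_conv using block False \<beta>
      by (intro Lambda_taylor_expansion_error) (auto simp: c_def blk_def)
    ultimately show ?thesis
      by simp
  qed
  then show ?thesis
    using rank by (intro exI[of _ "A + B"]) (auto simp: A_def B_def)
qed

lemma le_power_nat_ceiling_log:
  fixes b x :: real
  assumes "1 < b" "0 < x"
  shows "x \<le> b ^ nat \<lceil>log b x\<rceil>"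
proof -
  have "x = b powr log b x"
    using assms by simp
  also have "\<dots> \<le> b powr real (nat \<lceil>log b x\<rceil>)"
    using assms by (intro powr_mono) (auto simp: real_nat_ceiling_ge)
  also have "\<dots> = b ^ nat \<lceil>log b x\<rceil>"
    using assms by (simp add: powr_realpow)
  finally show ?thesis .
qed

lemma power_nat_ceiling_log_le:
  fixes q x :: real
  assumes "0 < q" "q < 1" "0 < x"
  shows "q ^ nat \<lceil>log (1 / q) (1 / x)\<rceil> \<le> x"
proof -
  have "1 / x \<le> (1 / q) ^ nat \<lceil>log (1 / q) (1 / x)\<rceil>"
    using assms by (intro le_power_nat_ceiling_log) simp_all
  then have "1 / (1 / q) ^ nat \<lceil>log (1 / q) (1 / x)\<rceil> \<le> 1 / (1 / x)"
    using assms by (intro divide_left_mono) simp_all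
  then show ?thesis
    by (simp add: power_one_over)
qed

lemma sqrt_pi_le_exp_1: "sqrt pi \<le> exp 1"
proof -
  have "sqrt pi \<le> sqrt 4"
    using pi_less_4 by (intro real_sqrt_le_mono) simp
  also have "\<dots> = 2"
    by (simp add: real_sqrt_eq_iff)
  also have "\<dots> \<le> exp 1"
    using exp_ge_add_one_self[of 1] by simp
  finally show ?thesis .
qed

theorem mainTheorem6:
  fixes N :: nat and \<epsilon> \<beta> :: real
  assumes "N > 1" and "0 < \<epsilon>" and "\<epsilon> < exp 1"
    and "1/2 < \<beta>" and "\<beta> < 1"
  defines "K \<equiv> \<lceil>log (1/\<beta>) (real N)\<rceil> * \<lceil>ln (exp 1 / \<epsilon>) / ln (\<beta> / (1 - \<beta>))\<rceil>"
  shows "\<exists>Ht :: real mat. Ht \<in> carrier_mat (N+1) (N+1)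
           \<and> int (vec_space.rank (N+1) Ht) \<le> K + 1
           \<and> (\<forall>j\<le>N. \<forall>k\<le>N. \<bar>Lambda ((real j + real k) / 2) - Ht $$ (j, k)\<bar> \<le> \<epsilon>)"
proof -
  note N = assms(1) and \<epsilon> = assms(2,3) and \<beta> = assms(4,5)
  define L where "L = nat \<lceil>log (1 / \<beta>) N\<rceil>"
  define M where "M = nat \<lceil>log (\<beta> / (1 - \<beta>)) (exp 1 / \<epsilon>)\<rceil>"
  have "0 < log (1 / \<beta>) N" "0 < log (\<beta> / (1 - \<beta>)) (exp 1 / \<epsilon>)"
    using N \<epsilon> \<beta> by (simp_all add: field_simps)
  then have K: "K + 1 = int (L * M + 1)" and "0 < L"
    by (simp_all add: K_def L_def M_def log_def)
  moreover have "\<beta> ^ L \<le> 1 / N"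
    using power_nat_ceiling_log_le[of \<beta> "1 / N"] N \<beta> by (simp add: L_def)
  then have "\<beta> ^ L * N \<le> 1"
    using N by (simp add: le_divide_eq)
  moreover have "((1 - \<beta>) / \<beta>) ^ M * sqrt pi \<le> \<epsilon> / exp 1 * exp 1"
    using power_nat_ceiling_log_le[of "(1 - \<beta>) / \<beta>" "\<epsilon> / exp 1"] \<epsilon> \<beta> sqrt_pi_le_exp_1
    by (intro mult_mono) (simp_all add: M_def)
  moreover have "0 < \<beta>" "\<beta> \<le> 1"
    using \<beta> by simp_all
  ultimately obtain Ht :: "real mat" where "Ht \<in> carrier_mat (N + 1) (N + 1)"
      "vec_space.rank (N + 1) Ht \<le> L * M + 1"
      "\<forall>j\<le>N. \<forall>k\<le>N. \<bar>Lambda ((real j + real k) / 2) - Ht $$ (j, k)\<bar> \<le> \<epsilon>"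
    using Lambda_matrix_low_rank_approximation[of \<beta> L N M] \<epsilon> by (auto intro: order_trans)
  with K show ?thesis
    by (metis of_nat_le_iff)
qed

end
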